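(* Let $\mathcal I$ be a canonical instance, and run the following procedure (Algorithm 1). Start with all bundles empty and all agents present. For $h=1,\dots,m$ in turn: let $\mathcal N_h$ be the set of agents $a_{i,j}$ still present with $v_{i,j}(e_h)\le w_i$; choose $a_{i,j}\in\mathcal N_h$ minimizing $v_{i,j}(e_h)$, breaking ties in favor of the smallest weight and remaining ties arbitrarily; add $e_h$ to $A_{i,j}$; if now $v_{i,j}(A_{i,j})\ge 3w_i$, remove $a_{i,j}$ from the set of present agents. Then, for every resolution of the remaining ties, $\mathcal N_h\neq\emptyset$ at every step $h$ (so every item is allocated), and the resulting allocation satisfies $v_{i,j}(A_{i,j})\le 3w_i=3\,\mathsf{WMMS}_{i,j}$ for every agent $a_{i,j}$; i.e. it is a $3$-WMMS allocation.
   Context: Chore-allocation instance: agents, a finite set $\mathcal M=\{e_1,\dots,e_m\}$ of indivisible items, positive weights, additive cost functions $v:2^{\mathcal M}\to\mathbb R_{\ge0}$. An allocation is an ordered partition of $\mathcal M$ into one (possibly empty) bundle per agent. The weighted maximin share of agent $a$ with weight $w_a$ and cost $v_a$ is $\mathsf{WMMS}_a=w_a\min_{\text{allocations }(B_b)_b}\max_{b}\frac{v_a(B_b)}{w_b}$; an allocation is $\beta$-WMMS if each agent's own bundle costs her at most $\beta\,\mathsf{WMMS}$. An instance is canonical if: (i) $\max$ weight is $w_1$, weights sum to $1$, and every weight equals $w_1/2^p$ for some nonnegative integer $p$; (ii) every agent's total cost $v(\mathcal M)=1$, and every single-item cost is either $0$ or $w_1/2^p$ for some nonnegative integer $p$;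 (iii) every agent has $v(e_1)\ge v(e_2)\ge\cdots\ge v(e_m)$; (iv) every agent's $\mathsf{WMMS}$ equals her weight. Group notation: agents of a canonical instance are partitioned into groups $G_1,\dots,G_k$ by weight, where all agents of $G_i$ have weight $w_i$ and $w_1>w_2>\cdots>w_k$; $G_i=\{a_{i,1},\dots,a_{i,n_i}\}$, and $v_{i,j},A_{i,j},\mathsf{WMMS}_{i,j}$ denote the cost function, bundle and WMMS of $a_{i,j}$. *)

theory Defs
  imports Complex_Main "HOL-Library.FuncSet"
begin

(* Agents are 0..<n, items are 0..<m (item h is e_{h+1}).
   w a = weight of agent a; v a e = cost of item e for agent a. *)

definition cost :: "(nat \<Rightarrow> nat \<Rightarrow> real) \<Rightarrow> nat \<Rightarrow> nat set \<Rightarrow> real" where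
  "cost v a S = (\<Sum>e\<in>S. v a e)"

(* allocations: ordered partitions of the items into one bundle per agent,
   represented as maps item \<mapsto> agent *)
definition allocations :: "nat \<Rightarrow> nat \<Rightarrow> (nat \<Rightarrow> nat) set" where
  "allocations n m = PiE {0..<m} (\<lambda>_. {0..<n})"

definition bundle_of :: "(nat \<Rightarrow> nat) \<Rightarrow> nat \<Rightarrow> nat \<Rightarrow> nat set" where
  "bundle_of f m b = {e\<in>{0..<m}. f e = b}"

definition WMMS :: "nat \<Rightarrow> nat \<Rightarrow> (nat \<Rightarrow> real) \<Rightarrow> (nat \<Rightarrow> nat \<Rightarrow> real) \<Rightarrow> nat \<Rightarrow> real" where
  "WMMS n m w v a = w a * Min ((\<lambda>f. Max ((\<lambda>b. cost v a (bundle_of f m b) / w b) ` {0..<n})) ` allocations n m)"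

definition wmax :: "nat \<Rightarrow> (nat \<Rightarrow> real) \<Rightarrow> real" where
  "wmax n w = Max (w ` {0..<n})"

definition canonical :: "nat \<Rightarrow> nat \<Rightarrow> (nat \<Rightarrow> real) \<Rightarrow> (nat \<Rightarrow> nat \<Rightarrow> real) \<Rightarrow> bool" where
  "canonical n m w v \<longleftrightarrow>
     0 < n \<and> (\<forall>a<n. 0 < w a) \<and> (\<forall>a<n. \<forall>e<m. 0 \<le> v a e) \<and>
     (\<Sum>a<n. w a) = 1 \<and>
     (\<forall>a<n. \<exists>p::nat. w a = wmax n w / 2 ^ p) \<and>
     (\<forall>a<n. cost v a {0..<m} = 1) \<and>
     (\<forall>a<n. \<forall>e<m. v a e = 0 \<or> (\<exists>p::nat. v a e = wmax n w / 2 ^ p)) \<and>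
     (\<forall>a<n. \<forall>e e'. e \<le> e' \<and> e' < m \<longrightarrow> v a e' \<le> v a e) \<and>
     (\<forall>a<n. WMMS n m w v a = w a)"

(* Algorithm 1.  A (partial) run is given by c :: nat => nat, where c h is the
   agent that receives item h.  The bundle of agent a before step h: *)
definition bundle_before :: "(nat \<Rightarrow> nat) \<Rightarrow> nat \<Rightarrow> nat \<Rightarrow> nat set" where
  "bundle_before c a h = {h'. h' < h \<and> c h' = a}"

definition present :: "nat \<Rightarrow> (nat \<Rightarrow> real) \<Rightarrow> (nat \<Rightarrow> nat \<Rightarrow> real) \<Rightarrow> (nat \<Rightarrow> nat) \<Rightarrow> nat \<Rightarrow> nat \<Rightarrow> bool" where
  "present n w v c h a \<longleftrightarrow> a < n \<and>
     \<not> (\<exists>h'<h. c h' = a \<and> cost v a (bundle_before c a (Suc h')) \<ge> 3 * w a)"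

definition Nset :: "nat \<Rightarrow> (nat \<Rightarrow> real) \<Rightarrow> (nat \<Rightarrow> nat \<Rightarrow> real) \<Rightarrow> (nat \<Rightarrow> nat) \<Rightarrow> nat \<Rightarrow> nat set" where
  "Nset n w v c h = {a. present n w v c h a \<and> v a h \<le> w a}"

definition legal_choice :: "nat \<Rightarrow> (nat \<Rightarrow> real) \<Rightarrow> (nat \<Rightarrow> nat \<Rightarrow> real) \<Rightarrow> (nat \<Rightarrow> nat) \<Rightarrow> nat \<Rightarrow> nat \<Rightarrow> bool" where
  "legal_choice n w v c h a \<longleftrightarrow>
     a \<in> Nset n w v c h \<and>
     (\<forall>b\<in>Nset n w v c h. v a h \<le> v b h) \<and>
     (\<forall>b\<in>Nset n w v c h. v b h = v a h \<longrightarrow> w a \<le> w b)"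

definition valid_run :: "nat \<Rightarrow> (nat \<Rightarrow> real) \<Rightarrow> (nat \<Rightarrow> nat \<Rightarrow> real) \<Rightarrow> (nat \<Rightarrow> nat) \<Rightarrow> nat \<Rightarrow> bool" where
  "valid_run n w v c k \<longleftrightarrow> (\<forall>h<k. legal_choice n w v c h (c h))"

end

theory Submission
  imports Defs
begin

text \<open>All costs and weights of a canonical instance lie in \<open>{0} \<union> {w\<^sub>1 / 2^p}\<close>: of two
  such values the smaller is at most half the larger, and a nonzero one divides every larger one.
  In the WMMS partition of an agent, an item costing her at least \<open>\<rho>\<close> lies in the bundle of an
  agent of weight at least \<open>\<rho>\<close>; so items each costing her at least \<open>\<rho>\<close> cost her at most the
  total weight \<open>W(\<rho>) = weight_above \<rho>\<close> of the agents of weight at least \<open>\<rho>\<close>.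

  The invariant of the algorithm is that the allocated items costing their receivers at least
  \<open>\<rho>\<close> cost them at most \<open>W(\<rho>)\<close> in total. For the induction compare the receivers with the
  heaviest agent \<open>p\<close> present when the last such item was allocated. Every agent heavier than
  \<open>p\<close> has left with at least three times its weight, so they received at least
  \<open>3 W(2 w\<^sub>p)\<close>. An item given to a heavier agent while \<open>p\<close> was present either costs
  its receiver more than \<open>w\<^sub>p\<close> (by the invariant these total at most \<open>W(2 w\<^sub>p)\<close>), or, by the
  tie-breaking rule, costs \<open>p\<close> at least twice as much as its receiver. Charging accordingly, the
  allocated items cost their receivers at most what they cost \<open>p\<close>, and each of them costs
  \<open>p\<close> at least \<open>\<rho>\<close>.

  The same comparison shows that \<open>N\<^sub>h\<close> is never empty. Otherwise either all agents have
  left, having received a total cost of at least 3, which costs the heaviest agent present at the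
  last step at most 1; or the heaviest present agent \<open>p\<close> values item \<open>h\<close>, hence all earlier
  items, at least \<open>2 w\<^sub>p\<close>, so these cost her at most \<open>W(2 w\<^sub>p)\<close>, while the earlier
  ones already cost her at least \<open>3 W(2 w\<^sub>p)\<close>. A bundle never exceeds \<open>3 w\<close>: before its last
  item it cost less than \<open>3 w\<close>, and that item divides its earlier items and \<open>3 w\<close>.\<close>

section \<open>Halvings of a real number\<close>

definition halvings :: "real \<Rightarrow> real set" where
  "halvings W = insert 0 (range (\<lambda>p::nat. W / 2 ^ p))"

lemma halving_le_imp_power_multiple:
  fixes W :: real
  assumes "0 < W" and "W / 2 ^ p \<le> W / 2 ^ q"
  shows "q \<le> p" and "W / 2 ^ q = 2 ^ (p - q) * (W / 2 ^ p)"
proof -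
  have "\<not> (2::real) ^ p < 2 ^ q"
  proof
    assume "(2::real) ^ p < 2 ^ q"
    then have "W / 2 ^ q < W / 2 ^ p" using \<open>0 < W\<close> by (simp add: divide_strict_left_mono)
    then show False using assms(2) by simp
  qed
  then show "q \<le> p" by simp
  then have "(2::real) ^ p = 2 ^ (p - q) * 2 ^ q"
    by (simp flip: power_add)
  then show "W / 2 ^ q = 2 ^ (p - q) * (W / 2 ^ p)"
    by simp
qed

lemma halvings_nonneg: "0 < W \<Longrightarrow> x \<in> halvings W \<Longrightarrow> 0 \<le> x"
  unfolding halvings_def by auto

lemma halvings_less_imp_double_le:
  assumes W: "0 < W" and x: "x \<in> halvings W" and y: "y \<in> halvings W" and "x < y"
  shows "2 * x \<le> y"
proof (cases "x = 0")
  case True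
  then show ?thesis using \<open>x < y\<close> by simp
next
  case False
  then obtain p where p: "x = W / 2 ^ p" using x unfolding halvings_def by auto
  have "y \<noteq> 0" using halvings_nonneg[OF W x] \<open>x < y\<close> by simp
  then obtain q where q: "y = W / 2 ^ q" using y unfolding halvings_def by auto
  have "x \<le> y" using \<open>x < y\<close> by simp
  note mult = halving_le_imp_power_multiple[OF W this[unfolded p q]]
  have "p \<noteq> q" using \<open>x < y\<close> p q by auto
  then have "(2::real) ^ 1 \<le> 2 ^ (p - q)" using mult(1)
    by (intro power_increasing) auto
  then have "2 * x \<le> 2 ^ (p - q) * x"
    using halvings_nonneg[OF W x] by (intro mult_right_mono) auto
  then show ?thesis using mult(2) p q by simp
qed

lemma halvings_le_imp_multiple:
  assumes W: "0 < W" and "x \<in> halvings W" and y: "y \<in> halvings W" and "0 < x" and "x \<le> y"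
  shows "\<exists>N::nat. y = real N * x"
proof -
  obtain p where p: "x = W / 2 ^ p" using assms(2,4) unfolding halvings_def by auto
  have "y \<noteq> 0" using assms by simp
  then obtain q where q: "y = W / 2 ^ q" using y unfolding halvings_def by auto
  have "y = real (2 ^ (p - q)) * x"
    using halving_le_imp_power_multiple(2)[OF W] assms(5) p q by simp
  then show ?thesis by blast
qed

lemma multiples_less_imp_add_le:
  fixes x :: real
  assumes "0 < x" and "a = real N * x" and "b = real M * x" and "a < b"
  shows "a + x \<le> b"
proof -
  have "N < M" using assms by (simp add: mult_less_cancel_right)
  then have "real N + 1 \<le> real M" by linarith
  then have "(real N + 1) * x \<le> real M * x" using \<open>0 < x\<close> by (intro mult_right_mono) auto
  then show ?thesis using assms by (simp add: algebra_simps)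
qed

section \<open>Runs of the algorithm\<close>

lemma present_less: "present n w v c h a \<Longrightarrow> a < n"
  unfolding present_def by simp

lemma present_antimono: "present n w v c h a \<Longrightarrow> h' \<le> h \<Longrightarrow> present n w v c h' a"
  unfolding present_def by auto

lemma valid_run_prefix: "valid_run n w v c s \<Longrightarrow> s' \<le> s \<Longrightarrow> valid_run n w v c s'"
  unfolding valid_run_def by auto

lemma legal_choiceD:
  assumes "legal_choice n w v c h a"
  shows "a < n" and "present n w v c h a" and "v a h \<le> w a"
  using assms unfolding legal_choice_def Nset_def present_def by auto

lemma valid_runD:
  assumes "valid_run n w v c s" and "h < s"
  shows "legal_choice n w v c h (c h)" and "c h < n" and "present n w v c h (c h)"
    and "v (c h) h \<le> w (c h)"
  using assms legal_choiceD unfolding valid_run_def by auto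

lemma legal_choice_le_heavier:
  assumes "legal_choice n w v c h (c h)" and "present n w v c h p" and "w (c h) \<le> w p"
  shows "v (c h) h \<le> v p h"
proof (cases "v p h \<le> w p")
  case True
  then have "p \<in> Nset n w v c h" using assms(2) unfolding Nset_def by simp
  then show ?thesis using assms(1) unfolding legal_choice_def by simp
next
  case False
  then show ?thesis using legal_choiceD(3)[OF assms(1)] assms(3) by linarith
qed

lemma heaviest_present_exists:
  assumes "present n w v c h a"
  obtains p where "present n w v c h p" and "\<And>b. present n w v c h b \<Longrightarrow> w b \<le> w p"
proof -
  let ?P = "{b. present n w v c h b}"
  have "?P \<subseteq> {..<n}" using present_less by blast
  then have fin: "finite (w ` ?P)" by (meson finite_imageI finite_lessThan finite_subset)
  moreover have "w ` ?P \<noteq> {}" using assms by auto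
  ultimately have "Max (w ` ?P) \<in> w ` ?P" by (rule Max_in)
  then obtain p where "present n w v c h p" and "w p = Max (w ` ?P)" by auto
  moreover have "w b \<le> Max (w ` ?P)" if "present n w v c h b" for b
    using fin that by (intro Max_ge) auto
  ultimately show ?thesis using that by simp
qed

lemma present_imp_bundle_cost_less:
  assumes "present n w v c h a" and "0 < w a"
  shows "cost v a (bundle_before c a h) < 3 * w a"
proof (cases "bundle_before c a h = {}")
  case True
  then show ?thesis using assms(2) unfolding cost_def by simp
next
  case False
  have fin: "finite (bundle_before c a h)" unfolding bundle_before_def by simp
  define h' where "h' = Max (bundle_before c a h)"
  have "h' \<in> bundle_before c a h" unfolding h'_def using fin False by (rule Max_in)
  then have "h' < h" and "c h' = a" unfolding bundle_before_def by auto
  have "i \<le> h'" if "i \<in> bundle_before c a h" for i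
    unfolding h'_def using fin that by (rule Max_ge)
  then have "bundle_before c a (Suc h') = bundle_before c a h"
    using \<open>h' < h\<close> \<open>c h' = a\<close> unfolding bundle_before_def by (auto simp: less_Suc_eq_le)
  moreover have "\<not> 3 * w a \<le> cost v a (bundle_before c a (Suc h'))"
    using assms(1) \<open>h' < h\<close> \<open>c h' = a\<close> unfolding present_def by blast
  ultimately show ?thesis by simp
qed

lemma sum_chosen_eq_sum_bundles:
  assumes "valid_run n w v c s"
  shows "(\<Sum>h<s. if Q (c h) then v (c h) h else 0)
       = (\<Sum>b<n. if Q b then cost v b (bundle_before c b s) else 0)"
proof -
  have "(\<Sum>h<s. if Q (c h) then v (c h) h else 0)
      = (\<Sum>b\<in>{..<n}. \<Sum>h\<in>{h\<in>{..<s}. c h = b}. if Q (c h) then v (c h) h else 0)"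
    using valid_runD(2)[OF assms] by (intro sum.group[symmetric]) auto
  also have "\<dots> = (\<Sum>b<n. if Q b then cost v b (bundle_before c b s) else 0)"
  proof (rule sum.cong[OF refl])
    fix b
    have "(\<Sum>h\<in>{h\<in>{..<s}. c h = b}. if Q (c h) then v (c h) h else 0)
        = (\<Sum>h\<in>bundle_before c b s. if Q b then v b h else 0)"
      unfolding bundle_before_def by (rule sum.cong) auto
    then show "(\<Sum>h\<in>{h\<in>{..<s}. c h = b}. if Q (c h) then v (c h) h else 0)
        = (if Q b then cost v b (bundle_before c b s) else 0)"
      by (simp add: cost_def)
  qed
  finally show ?thesis .
qed

section \<open>Canonical instances\<close>

locale canonical_instance =
  fixes n m :: nat and w :: "nat \<Rightarrow> real" and v :: "nat \<Rightarrow> nat \<Rightarrow> real"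
  assumes canonical: "canonical n m w v"
begin

abbreviation w1 :: real where "w1 \<equiv> wmax n w"

lemma n_pos: "0 < n"
  using canonical unfolding canonical_def by simp

lemma w_pos: "a < n \<Longrightarrow> 0 < w a"
  using canonical unfolding canonical_def by simp

lemma v_nonneg: "a < n \<Longrightarrow> e < m \<Longrightarrow> 0 \<le> v a e"
  using canonical unfolding canonical_def by simp

lemma sum_w: "(\<Sum>a<n. w a) = 1"
  using canonical unfolding canonical_def by simp

lemma cost_all_items: "a < n \<Longrightarrow> cost v a {0..<m} = 1"
  using canonical unfolding canonical_def by simp

lemma v_antimono: "a < n \<Longrightarrow> e \<le> e' \<Longrightarrow> e' < m \<Longrightarrow> v a e' \<le> v a e"
  using canonical unfolding canonical_def by simp

lemma WMMS_eq_weight: "a < n \<Longrightarrow> WMMS n m w v a = w a"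
  using canonical unfolding canonical_def by simp

lemma w1_pos: "0 < w1"
proof -
  have "w 0 \<le> w1" unfolding wmax_def using n_pos by (intro Max_ge) auto
  then show ?thesis using w_pos[OF n_pos] by linarith
qed

lemma w_in_halvings: "a < n \<Longrightarrow> w a \<in> halvings w1"
  using canonical unfolding canonical_def halvings_def by (auto simp: image_iff)

lemma v_in_halvings: "a < n \<Longrightarrow> e < m \<Longrightarrow> v a e \<in> halvings w1"
  using canonical unfolding canonical_def halvings_def by (auto simp: image_iff)

lemma double_le_if_less: "x \<in> halvings w1 \<Longrightarrow> y \<in> halvings w1 \<Longrightarrow> x < y \<Longrightarrow> 2 * x \<le> y"
  using halvings_less_imp_double_le[OF w1_pos] .

lemma cost_mono:
  assumes "a < n" and "S \<subseteq> T" and "T \<subseteq> {0..<m}"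
  shows "cost v a S \<le> cost v a T"
proof -
  have "finite T" using assms(3) finite_subset by blast
  moreover have "0 \<le> v a e" if "e \<in> T" for e
    using assms(1,3) that by (intro v_nonneg) auto
  ultimately show ?thesis unfolding cost_def using assms(2) by (intro sum_mono2) auto
qed

definition weight_above :: "real \<Rightarrow> real" where
  "weight_above \<rho> = (\<Sum>b<n. if \<rho> \<le> w b then w b else 0)"

lemma weight_above_nonneg: "0 \<le> weight_above \<rho>"
  unfolding weight_above_def using w_pos by (intro sum_nonneg) (auto intro: less_imp_le)

lemma weight_above_double:
  assumes "p < n"
  shows "weight_above (2 * w p) = (\<Sum>b<n. if w p < w b then w b else 0)"
  unfolding weight_above_def
proof (rule sum.cong[OF refl])
  fix b assume "b \<in> {..<n}"
  then have "2 * w p \<le> w b \<longleftrightarrow> w p < w b"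
    using double_le_if_less[OF w_in_halvings w_in_halvings] w_pos assms by force
  then show "(if 2 * w p \<le> w b then w b else 0) = (if w p < w b then w b else 0)" by simp
qed

lemma WMMS_partition_exists:
  assumes "a < n"
  shows "\<exists>f\<in>allocations n m. \<forall>b<n. cost v a (bundle_of f m b) \<le> w b"
proof -
  define ratio where "ratio f = Max ((\<lambda>b. cost v a (bundle_of f m b) / w b) ` {0..<n})" for f
  have "finite (allocations n m)" unfolding allocations_def by (intro finite_PiE) auto
  moreover have "allocations n m \<noteq> {}"
    unfolding allocations_def using n_pos by (auto simp: PiE_eq_empty_iff)
  ultimately have "Min (ratio ` allocations n m) \<in> ratio ` allocations n m" by simp
  moreover have "Min (ratio ` allocations n m) = 1"
    using WMMS_eq_weight[OF assms] w_pos[OF assms] unfolding WMMS_def ratio_def by simp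
  ultimately obtain f where f: "f \<in> allocations n m" and "ratio f = 1" by force
  have "cost v a (bundle_of f m b) \<le> w b" if "b < n" for b
  proof -
    have "cost v a (bundle_of f m b) / w b \<le> ratio f"
      unfolding ratio_def using that by (intro Max_ge) auto
    then show ?thesis using \<open>ratio f = 1\<close> w_pos[OF that] by (simp add: divide_le_eq)
  qed
  then show ?thesis using f by blast
qed

lemma cost_le_weight_above:
  assumes a: "a < n" and "0 < \<rho>" and S: "S \<subseteq> {0..<m}" and large: "\<forall>e\<in>S. \<rho> \<le> v a e"
  shows "cost v a S \<le> weight_above \<rho>"
proof -
  obtain f where f: "f \<in> allocations n m" and fb: "\<forall>b<n. cost v a (bundle_of f m b) \<le> w b"
    using WMMS_partition_exists[OF a] by blast
  define part where "part b = {e\<in>S. f e = b}" for b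
  have "cost v a S = (\<Sum>b\<in>{..<n}. cost v a (part b))"
    unfolding cost_def part_def using f S finite_subset
    by (intro sum.group[symmetric]) (auto simp: allocations_def PiE_iff)
  also have "\<dots> \<le> weight_above \<rho>"
    unfolding weight_above_def
  proof (rule sum_mono)
    fix b assume b: "b \<in> {..<n}"
    have "part b \<subseteq> bundle_of f m b" and "bundle_of f m b \<subseteq> {0..<m}"
      using S unfolding part_def bundle_of_def by auto
    then have le: "cost v a (part b) \<le> w b"
      using cost_mono[OF a] fb b by (meson lessThan_iff order_trans)
    show "cost v a (part b) \<le> (if \<rho> \<le> w b then w b else 0)"
    proof (cases "part b = {}")
      case True
      then show ?thesis using w_pos b by (simp add: cost_def less_imp_le)
    next
      case False
      then obtain e where e: "e \<in> part b" by blast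
      moreover have "part b \<subseteq> {0..<m}" using S unfolding part_def by auto
      ultimately have "cost v a {e} \<le> cost v a (part b)"
        by (intro cost_mono[OF a]) auto
      then have "\<rho> \<le> cost v a (part b)"
        using large e unfolding part_def cost_def by auto
      then show ?thesis using le by simp
    qed
  qed
  finally show ?thesis .
qed

lemma bundle_cost_ge_if_removed:
  assumes "b < n" and "s \<le> m" and "\<not> present n w v c s b"
  shows "3 * w b \<le> cost v b (bundle_before c b s)"
proof -
  obtain h where "h < s" and "3 * w b \<le> cost v b (bundle_before c b (Suc h))"
    using assms(1,3) unfolding present_def by auto
  moreover have "cost v b (bundle_before c b (Suc h)) \<le> cost v b (bundle_before c b s)"
    using \<open>h < s\<close> assms(2) unfolding bundle_before_def by (intro cost_mono[OF assms(1)]) auto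
  ultimately show ?thesis by linarith
qed

lemma legal_choice_double_le_lighter:
  assumes L: "legal_choice n w v c h (c h)" and "h < m" and p: "present n w v c h p"
    and lighter: "w p < w (c h)" and small: "v (c h) h \<le> w p"
  shows "2 * v (c h) h \<le> v p h"
proof (cases "v p h \<le> w p")
  case True
  then have "p \<in> Nset n w v c h" using p unfolding Nset_def by simp
  then have "v (c h) h \<le> v p h" and "v p h \<noteq> v (c h) h"
    using L lighter unfolding legal_choice_def by force+
  then show ?thesis
    using double_le_if_less v_in_halvings legal_choiceD(1)[OF L] present_less[OF p] \<open>h < m\<close>
    by simp
next
  case False
  then have "2 * w p \<le> v p h"
    using double_le_if_less w_in_halvings v_in_halvings present_less[OF p] \<open>h < m\<close> by simp
  then show ?thesis using small by linarith
qed

lemma legal_choice_charge: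
  assumes L: "legal_choice n w v c h (c h)" and "h < m" and p: "present n w v c h p"
  shows "v (c h) h + (if w p < w (c h) then v (c h) h else 0)
       \<le> v p h + 2 * (if w p < w (c h) \<and> w p < v (c h) h then v (c h) h else 0)"
proof (cases "w p < w (c h)")
  case False
  then show ?thesis using legal_choice_le_heavier[OF L p] by simp
next
  case True
  have "0 \<le> v p h" using v_nonneg present_less[OF p] \<open>h < m\<close> by simp
  then show ?thesis using True legal_choice_double_le_lighter[OF L \<open>h < m\<close> p True] by auto
qed

lemma received_by_removed_heavier_ge:
  assumes run: "valid_run n w v c s" and "s \<le> m" and "p < n"
    and removed: "\<forall>b. w p < w b \<longrightarrow> \<not> present n w v c s b"
  shows "3 * weight_above (2 * w p) \<le> (\<Sum>h<s. if w p < w (c h) then v (c h) h else 0)"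
proof -
  have "3 * weight_above (2 * w p) = (\<Sum>b<n. if w p < w b then 3 * w b else 0)"
    unfolding weight_above_double[OF \<open>p < n\<close>] sum_distrib_left by (intro sum.cong) auto
  also have "\<dots> \<le> (\<Sum>b<n. if w p < w b then cost v b (bundle_before c b s) else 0)"
    using bundle_cost_ge_if_removed \<open>s \<le> m\<close> removed by (intro sum_mono) auto
  also have "\<dots> = (\<Sum>h<s. if w p < w (c h) then v (c h) h else 0)"
    by (rule sum_chosen_eq_sum_bundles[OF run, symmetric])
  finally show ?thesis .
qed

lemma allocated_le_heaviest_if_large_bounded:
  assumes run: "valid_run n w v c s" and "s \<le> m" and "p < n"
    and p: "\<forall>h<s. present n w v c h p"
    and removed: "\<forall>b. w p < w b \<longrightarrow> \<not> present n w v c s b"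
    and large: "(\<Sum>h<s. if 2 * w p \<le> v (c h) h then v (c h) h else 0) \<le> weight_above (2 * w p)"
  shows "(\<Sum>h<s. v (c h) h) \<le> (\<Sum>h<s. v p h)"
proof -
  define heavier where "heavier h = (if w p < w (c h) then v (c h) h else 0)" for h
  define heavier_large where
    "heavier_large h = (if w p < w (c h) \<and> w p < v (c h) h then v (c h) h else 0)" for h
  have "(\<Sum>h<s. v (c h) h + heavier h) \<le> (\<Sum>h<s. v p h + 2 * heavier_large h)"
    using legal_choice_charge valid_runD(1)[OF run] p \<open>s \<le> m\<close>
    unfolding heavier_def heavier_large_def by (intro sum_mono) simp
  then have "(\<Sum>h<s. v (c h) h) + sum heavier {..<s} \<le> (\<Sum>h<s. v p h) + 2 * sum heavier_large {..<s}"
    by (simp add: sum.distrib sum_distrib_left)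
  moreover have "3 * weight_above (2 * w p) \<le> sum heavier {..<s}"
    unfolding heavier_def by (rule received_by_removed_heavier_ge[OF run \<open>s \<le> m\<close> \<open>p < n\<close> removed])
  moreover have "sum heavier_large {..<s} \<le> weight_above (2 * w p)"
  proof -
    have "heavier_large h \<le> (if 2 * w p \<le> v (c h) h then v (c h) h else 0)" if "h < s" for h
      using double_le_if_less[OF w_in_halvings v_in_halvings] valid_runD(2)[OF run that]
        v_nonneg \<open>p < n\<close> \<open>s \<le> m\<close> that
      unfolding heavier_large_def by auto
    then have "sum heavier_large {..<s} \<le> (\<Sum>h<s. if 2 * w p \<le> v (c h) h then v (c h) h else 0)"
      by (intro sum_mono) simp
    then show ?thesis using large by linarith
  qed
  ultimately show ?thesis using weight_above_nonneg[of "2 * w p"] by linarith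
qed

lemma large_allocated_le_weight_above:
  assumes "valid_run n w v c s" and "s \<le> m" and "0 < \<rho>"
  shows "(\<Sum>h<s. if \<rho> \<le> v (c h) h then v (c h) h else 0) \<le> weight_above \<rho>"
  using assms
proof (induction s arbitrary: \<rho>)
  case 0
  then show ?case by (simp add: weight_above_nonneg)
next
  case (Suc s)
  have run: "valid_run n w v c s" by (rule valid_run_prefix[OF Suc.prems(1)]) simp
  have L: "legal_choice n w v c s (c s)" and cs: "present n w v c s (c s)"
    using valid_runD[OF Suc.prems(1), of s] by auto
  have "s < m" using Suc.prems(2) by simp
  show ?case
  proof (cases "\<rho> \<le> v (c s) s")
    case False
    then show ?thesis using Suc.IH[OF run _ Suc.prems(3)] Suc.prems(2) by simp
  next
    case True
    obtain p where p: "present n w v c s p" and heaviest: "\<And>b. present n w v c s b \<Longrightarrow> w b \<le> w p"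
      using heaviest_present_exists[OF cs] by blast
    have "p < n" using present_less[OF p] .
    have "w (c s) \<le> w p" using heaviest[OF cs] .
    then have "v (c s) s < 2 * w p"
      using legal_choiceD(3)[OF L] w_pos[OF \<open>p < n\<close>] by simp
    then have "(\<Sum>h<Suc s. if 2 * w p \<le> v (c h) h then v (c h) h else 0)
        = (\<Sum>h<s. if 2 * w p \<le> v (c h) h then v (c h) h else 0)" by simp
    also have "\<dots> \<le> weight_above (2 * w p)"
      using Suc.IH[OF run] Suc.prems(2) w_pos[OF \<open>p < n\<close>] by simp
    finally have large: "(\<Sum>h<Suc s. if 2 * w p \<le> v (c h) h then v (c h) h else 0)
        \<le> weight_above (2 * w p)" .
    have "(\<Sum>h<Suc s. if \<rho> \<le> v (c h) h then v (c h) h else 0) \<le> (\<Sum>h<Suc s. v (c h) h)"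
      using v_nonneg valid_runD(2)[OF Suc.prems(1)] Suc.prems(2) by (intro sum_mono) auto
    also have "\<dots> \<le> (\<Sum>h<Suc s. v p h)"
    proof (rule allocated_le_heaviest_if_large_bounded[OF Suc.prems(1,2) \<open>p < n\<close> _ _ large])
      show "\<forall>h<Suc s. present n w v c h p" using present_antimono[OF p] by simp
      show "\<forall>b. w p < w b \<longrightarrow> \<not> present n w v c (Suc s) b"
        using heaviest present_antimono[of n w v c "Suc s" _ s] by (auto simp: not_le[symmetric])
    qed
    also have "\<dots> = cost v p {..<Suc s}"
      unfolding cost_def ..
    also have "\<dots> \<le> weight_above \<rho>"
    proof (rule cost_le_weight_above[OF \<open>p < n\<close> Suc.prems(3)])
      show "{..<Suc s} \<subseteq> {0..<m}" using \<open>s < m\<close> by auto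
      have "\<rho> \<le> v p s" using True legal_choice_le_heavier[OF L p \<open>w (c s) \<le> w p\<close>] by simp
      then show "\<forall>e\<in>{..<Suc s}. \<rho> \<le> v p e"
        using v_antimono[OF \<open>p < n\<close> _ \<open>s < m\<close>] by (meson lessThan_iff less_Suc_eq_le order_trans)
    qed
    finally show ?thesis .
  qed
qed

lemma allocated_le_heaviest_present:
  assumes run: "valid_run n w v c s" and "s \<le> m" and "p < n"
    and "\<forall>h<s. present n w v c h p"
    and "\<forall>b. w p < w b \<longrightarrow> \<not> present n w v c s b"
  shows "(\<Sum>h<s. v (c h) h) \<le> (\<Sum>h<s. v p h)"
  using assms large_allocated_le_weight_above[OF run \<open>s \<le> m\<close>] w_pos[OF \<open>p < n\<close>]
  by (intro allocated_le_heaviest_if_large_bounded) auto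

lemma some_agent_present:
  assumes run: "valid_run n w v c s" and "s \<le> m"
  shows "\<exists>a. present n w v c s a"
proof (rule ccontr)
  assume none: "\<nexists>a. present n w v c s a"
  have "s \<noteq> 0" using none n_pos unfolding present_def by auto
  then obtain j where s: "s = Suc j" using not0_implies_Suc by blast
  have "present n w v c j (c j)" using valid_runD(3)[OF run] s by simp
  then obtain p where p: "present n w v c j p" using heaviest_present_exists by blast
  have "p < n" using present_less[OF p] .
  have "(\<Sum>b<n. 3 * w b) \<le> (\<Sum>b<n. cost v b (bundle_before c b s))"
    using bundle_cost_ge_if_removed \<open>s \<le> m\<close> none by (intro sum_mono) auto
  also have "\<dots> = (\<Sum>h<s. v (c h) h)"
    using sum_chosen_eq_sum_bundles[OF run, of "\<lambda>_. True"] by simp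
  also have "\<dots> \<le> (\<Sum>h<s. v p h)"
    using present_antimono[OF p] none s
    by (intro allocated_le_heaviest_present[OF run \<open>s \<le> m\<close> \<open>p < n\<close>]) auto
  also have "\<dots> \<le> cost v p {0..<m}"
    unfolding cost_def[symmetric] using \<open>s \<le> m\<close> by (intro cost_mono[OF \<open>p < n\<close>]) auto
  finally show False
    using sum_w cost_all_items[OF \<open>p < n\<close>] by (simp add: sum_distrib_left[symmetric])
qed

lemma Nset_nonempty:
  assumes run: "valid_run n w v c h" and "h < m"
  shows "Nset n w v c h \<noteq> {}"
proof
  assume empty: "Nset n w v c h = {}"
  obtain a where "present n w v c h a" using some_agent_present[OF run] \<open>h < m\<close> by auto
  then obtain p where p: "present n w v c h p"
    and heaviest: "\<And>b. present n w v c h b \<Longrightarrow> w b \<le> w p"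
    using heaviest_present_exists by blast
  have "p < n" using present_less[OF p] .
  have "w p < v p h" using empty p unfolding Nset_def by auto
  then have large: "2 * w p \<le> v p h"
    using double_le_if_less w_in_halvings v_in_halvings \<open>p < n\<close> \<open>h < m\<close> by simp
  have removed: "\<forall>b. w p < w b \<longrightarrow> \<not> present n w v c h b" using heaviest by force
  have "3 * weight_above (2 * w p) \<le> (\<Sum>i<h. if w p < w (c i) then v (c i) i else 0)"
    using received_by_removed_heavier_ge[OF run _ \<open>p < n\<close> removed] \<open>h < m\<close> by simp
  also have "\<dots> \<le> (\<Sum>i<h. v (c i) i)"
    using v_nonneg valid_runD(2)[OF run] \<open>h < m\<close> by (intro sum_mono) auto
  also have "\<dots> \<le> (\<Sum>i<h. v p i)"
    using present_antimono[OF p] removed \<open>h < m\<close>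
    by (intro allocated_le_heaviest_present[OF run _ \<open>p < n\<close>]) auto
  also have "\<dots> = cost v p {..<Suc h} - v p h"
    unfolding cost_def by simp
  also have "\<dots> \<le> weight_above (2 * w p) - v p h"
  proof -
    have "\<forall>i\<in>{..<Suc h}. 2 * w p \<le> v p i"
      using large v_antimono[OF \<open>p < n\<close> _ \<open>h < m\<close>] by (meson lessThan_iff less_Suc_eq_le order_trans)
    then have "cost v p {..<Suc h} \<le> weight_above (2 * w p)"
      using w_pos[OF \<open>p < n\<close>] \<open>h < m\<close> by (intro cost_le_weight_above[OF \<open>p < n\<close>]) auto
    then show ?thesis by simp
  qed
  finally show False
    using large w_pos[OF \<open>p < n\<close>] weight_above_nonneg[of "2 * w p"] by linarith
qed

lemma cost_add_smaller_item_le: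
  assumes a: "a < n" and "s < m" and "v a s \<le> w a" and B: "B \<subseteq> {..<s}"
    and less: "cost v a B < 3 * w a"
  shows "cost v a B + v a s \<le> 3 * w a"
proof (cases "v a s = 0")
  case True
  then show ?thesis using less by simp
next
  case False
  then have pos: "0 < v a s" using v_nonneg[OF a \<open>s < m\<close>] by simp
  note multiple = halvings_le_imp_multiple[OF w1_pos v_in_halvings[OF a \<open>s < m\<close>] _ pos]
  have "\<forall>i\<in>B. \<exists>N::nat. v a i = real N * v a s"
  proof
    fix i assume "i \<in> B"
    then have "i < s" using B by auto
    then show "\<exists>N::nat. v a i = real N * v a s"
      using multiple v_in_halvings v_antimono a \<open>s < m\<close> by simp
  qed
  then obtain N where "\<forall>i\<in>B. v a i = real (N i) * v a s" by metis
  then have "cost v a B = real (\<Sum>i\<in>B. N i) * v a s"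
    unfolding cost_def by (simp add: sum_distrib_right)
  moreover obtain K :: nat where "w a = real K * v a s"
    using multiple[OF w_in_halvings[OF a] \<open>v a s \<le> w a\<close>] by blast
  then have "3 * w a = real (3 * K) * v a s" by simp
  ultimately show ?thesis using multiples_less_imp_add_le[OF pos _ _ less] by blast
qed

lemma bundle_cost_le:
  assumes "valid_run n w v c s" and "s \<le> m" and "a < n"
  shows "cost v a (bundle_before c a s) \<le> 3 * w a"
  using assms(1,2)
proof (induction s)
  case 0
  then show ?case using w_pos[OF \<open>a < n\<close>] by (simp add: cost_def bundle_before_def)
next
  case (Suc s)
  have run: "valid_run n w v c s" by (rule valid_run_prefix[OF Suc.prems(1)]) simp
  show ?case
  proof (cases "c s = a")
    case False
    then have "bundle_before c a (Suc s) = bundle_before c a s"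
      unfolding bundle_before_def by (auto simp: less_Suc_eq)
    then show ?thesis using Suc.IH[OF run] Suc.prems(2) by simp
  next
    case True
    have "bundle_before c a (Suc s) = insert s (bundle_before c a s)"
      using True unfolding bundle_before_def by (auto simp: less_Suc_eq)
    then have "cost v a (bundle_before c a (Suc s)) = cost v a (bundle_before c a s) + v a s"
      unfolding cost_def by (simp add: bundle_before_def)
    also have "\<dots> \<le> 3 * w a"
    proof (rule cost_add_smaller_item_le[OF \<open>a < n\<close>])
      show "s < m" using Suc.prems(2) by simp
      show "v a s \<le> w a" using valid_runD(4)[OF Suc.prems(1)] True by auto
      show "bundle_before c a s \<subseteq> {..<s}" unfolding bundle_before_def by auto
      show "cost v a (bundle_before c a s) < 3 * w a"
        using valid_runD(3)[OF Suc.prems(1)] True w_pos[OF \<open>a < n\<close>]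
        by (auto intro: present_imp_bundle_cost_less)
    qed
    finally show ?thesis .
  qed
qed

end

theorem theorem4p1:
  fixes n m :: nat and w :: "nat \<Rightarrow> real" and v :: "nat \<Rightarrow> nat \<Rightarrow> real"
  assumes "canonical n m w v"
  shows "(\<forall>h<m. \<forall>c. valid_run n w v c h \<longrightarrow> Nset n w v c h \<noteq> {}) \<and>
         (\<forall>c. valid_run n w v c m \<longrightarrow>
            (\<forall>a<n. cost v a (bundle_before c a m) \<le> 3 * w a \<and>
                   3 * w a = 3 * WMMS n m w v a))"
proof -
  interpret canonical_instance n m w v using assms by unfold_locales
  show ?thesis using Nset_nonempty bundle_cost_le WMMS_eq_weight by simp
qed

end
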